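(* Let $\mathbf L=\{L_1,\dots,L_n\}$ be a finite multiset of positive rationals, $k\in\mathbb N_{>0}$, $I\subseteq[1..n]$, and $f_l,f_u:I\to\mathbb N_{>0}$ such that (i) for every $i\in I$: $f_l(i)=1$ or $L_i/(f_l(i)-1)$ is infeasible; (ii) for every $i\in I$: $L_i/f_u(i)$ is feasible; (iii) for every $i'\in[1..n]\setminus I$: $L_{i'}$ is feasible but $L_{i'}\neq l^\star$. Then $l^\star\in\mathcal C(I,f_l,f_u)$.
   Context: For $l\in\mathbb Q_{>0}$: $m(l)=\sum_{i=1}^n\lfloor L_i/l\rfloor$, $c(l)=\sum_{i=1}^n(\lceil L_i/l\rceil-1)$; $l$ is feasible if $m(l)\ge k$. The optimal cut length $l^\star$ is the feasible length minimizing $c$ among feasible lengths (it exists, is unique, and equals the largest feasible length). For $I\subseteq[1..n]$ and $f_l:I\to\mathbb N$, $f_u:I\to\mathbb N\cup\{\infty\}$, the candidate multiset is $\mathcal C(I,f_l,f_u)=\biguplus_{i\in I}\{L_i/j : j\in\mathbb N,\ f_l(i)\le j\le f_u(i)\}$, where each pair $(i,j)$ contributes one occurrence. A triple $(I,f_l,f_u)$ satisfying (i)–(iii) is called an admissible restriction. *)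

theory Defs
  imports Complex_Main "HOL-Library.Multiset"
begin

definition m_pieces :: "(nat \<Rightarrow> rat) \<Rightarrow> nat \<Rightarrow> rat \<Rightarrow> int" where
  "m_pieces L n l = (\<Sum>i=1..n. \<lfloor>L i / l\<rfloor>)"

definition c_cuts :: "(nat \<Rightarrow> rat) \<Rightarrow> nat \<Rightarrow> rat \<Rightarrow> int" where
  "c_cuts L n l = (\<Sum>i=1..n. \<lceil>L i / l\<rceil> - 1)"

definition feasible :: "(nat \<Rightarrow> rat) \<Rightarrow> nat \<Rightarrow> nat \<Rightarrow> rat \<Rightarrow> bool" where
  "feasible L n k l \<longleftrightarrow> l > 0 \<and> m_pieces L n l \<ge> int k"

text \<open>The optimal cut length: the feasible length minimizing the number of cuts
  among feasible lengths (the paper asserts existence and uniqueness).\<close>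
definition opt_len :: "(nat \<Rightarrow> rat) \<Rightarrow> nat \<Rightarrow> nat \<Rightarrow> rat" where
  "opt_len L n k = (THE l. feasible L n k l \<and>
      (\<forall>l'. feasible L n k l' \<longrightarrow> c_cuts L n l \<le> c_cuts L n l'))"

text \<open>Candidate multiset C(I, f_l, f_u): one occurrence of L i / j for each pair (i, j)
  with i in I and f_l i \<le> j \<le> f_u i (here f_u is finite-valued).\<close>
definition candidates :: "(nat \<Rightarrow> rat) \<Rightarrow> nat set \<Rightarrow> (nat \<Rightarrow> nat) \<Rightarrow> (nat \<Rightarrow> nat) \<Rightarrow> rat multiset" where
  "candidates L I fl fu = (\<Sum>i\<in>I. mset (map (\<lambda>j. L i / of_nat j) [fl i..<Suc (fu i)]))"

end

theory Submission
  imports Defs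
begin

text \<open>Both m and c are antitone in l, and m changes only at the breakpoints
  L i / j (i \<le> n, j \<ge> 1). Hence the feasible lengths form a down-set whose supremum is attained
  at a breakpoint L i / j; since c jumps strictly at that breakpoint, this
  greatest feasible length is the optimal one. Condition (iii) forces i \<in> I:
  otherwise L i would be a feasible length \<ge> l*, hence equal to it. Finally
  (ii) and (i), via monotonicity of feasibility, give fl i \<le> j \<le> fu i.\<close>

lemma m_pieces_antimono:
  assumes "\<forall>i\<in>{1..n}. L i > 0" "0 < l" "l \<le> l'"
  shows "m_pieces L n l' \<le> m_pieces L n l"
  unfolding m_pieces_def
proof (intro sum_mono floor_mono)
  fix i assume "i \<in> {1..n}"
  then have "L i > 0" using assms by auto
  then show "L i / l' \<le> L i / l" using assms by (simp add: frac_le)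
qed

lemma c_cuts_antimono:
  assumes "\<forall>i\<in>{1..n}. L i > 0" "0 < l" "l \<le> l'"
  shows "c_cuts L n l' \<le> c_cuts L n l"
  unfolding c_cuts_def
proof (intro sum_mono diff_right_mono ceiling_mono)
  fix i assume "i \<in> {1..n}"
  then have "L i > 0" using assms by auto
  then show "L i / l' \<le> L i / l" using assms by (simp add: frac_le)
qed

lemma c_cuts_strict_antimono_at_breakpoint:
  assumes L_pos: "\<forall>i\<in>{1..n}. L i > 0" and "0 < l" "l < l'"
    and i: "i \<in> {1..n}" and breakpoint: "L i / l' = of_int j"
  shows "c_cuts L n l' < c_cuts L n l"
  unfolding c_cuts_def
proof (rule sum_strict_mono_ex1)
  show "\<forall>x\<in>{1..n}. \<lceil>L x / l'\<rceil> - 1 \<le> \<lceil>L x / l\<rceil> - 1"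
  proof
    fix x assume "x \<in> {1..n}"
    then have "L x / l' \<le> L x / l"
      using L_pos \<open>0 < l\<close> \<open>l < l'\<close> by (intro divide_left_mono) (auto intro: less_imp_le)
    then show "\<lceil>L x / l'\<rceil> - 1 \<le> \<lceil>L x / l\<rceil> - 1"
      using ceiling_mono by (meson diff_right_mono)
  qed
  have "L i / l' < L i / l"
    using L_pos i \<open>0 < l\<close> \<open>l < l'\<close> by (simp add: divide_strict_left_mono)
  then have "\<lceil>L i / l'\<rceil> < \<lceil>L i / l\<rceil>"
    unfolding breakpoint by (simp add: less_ceiling_iff)
  then show "\<exists>x\<in>{1..n}. \<lceil>L x / l'\<rceil> - 1 < \<lceil>L x / l\<rceil> - 1" using i by force
qed simp

lemma feasible_antimono:
  assumes "\<forall>i\<in>{1..n}. L i > 0" "feasible L n k l'" "0 < l" "l \<le> l'"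
  shows "feasible L n k l"
  using assms m_pieces_antimono[of n L l l'] unfolding feasible_def by auto

lemma feasible_div_demand:
  assumes "\<forall>i\<in>{1..n}. L i > 0" "i \<in> {1..n}" "k > 0"
  shows "feasible L n k (L i / of_nat k)"
proof -
  have "int k = \<lfloor>L i / (L i / of_nat k)\<rfloor>" using assms by force
  also have "\<dots> \<le> m_pieces L n (L i / of_nat k)"
    unfolding m_pieces_def using assms
    by (intro member_le_sum) (auto intro!: divide_nonneg_pos less_imp_le)
  finally show ?thesis using assms unfolding feasible_def by simp
qed

lemma le_div_floor_div:
  assumes "0 < l" "1 \<le> \<lfloor>x / l\<rfloor>"
  shows "l \<le> x / of_int \<lfloor>x / l\<rfloor>"
proof -
  have "l * of_int \<lfloor>x / l\<rfloor> \<le> x"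
    using \<open>0 < l\<close> by (metis mult.commute of_int_floor_le pos_le_divide_eq)
  then show ?thesis using assms by (simp add: pos_le_divide_eq)
qed

lemma le_floor_div_of_le_div:
  assumes "0 < l'" "l' \<le> x / of_int j" "1 \<le> j" "x > 0"
  shows "j \<le> \<lfloor>x / l'\<rfloor>"
proof -
  have "x / (x / of_int j) \<le> x / l'" using assms by (intro frac_le) auto
  then show ?thesis using assms by (simp add: le_floor_iff)
qed

text \<open>The nearest breakpoint above l is the least L i / \<lfloor>L i / l\<rfloor>,
  and no \<lfloor>L i / l\<rfloor> drops before it, so m does not drop either.\<close>
lemma feasible_round_up:
  assumes L_pos: "\<forall>i\<in>{1..n}. L i > 0" and "k > 0" and feasible: "feasible L n k l"
  shows "\<exists>i\<in>{1..n}. \<exists>j\<ge>1. of_nat j \<le> L i / l \<and> l \<le> L i / of_nat j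
    \<and> feasible L n k (L i / of_nat j)"
proof -
  have "0 < l" using feasible unfolding feasible_def by auto
  define A where "A = {i\<in>{1..n}. 1 \<le> \<lfloor>L i / l\<rfloor>}"
  have "A \<noteq> {}"
  proof
    assume "A = {}"
    have "\<lfloor>L i / l\<rfloor> = 0" if "i \<in> {1..n}" for i
    proof -
      have "0 \<le> \<lfloor>L i / l\<rfloor>" using that L_pos \<open>0 < l\<close> by (auto intro: less_imp_le)
      moreover have "\<not> 1 \<le> \<lfloor>L i / l\<rfloor>" using that \<open>A = {}\<close> unfolding A_def by auto
      ultimately show ?thesis by linarith
    qed
    then have "m_pieces L n l = 0" unfolding m_pieces_def by simp
    then show False using feasible \<open>k > 0\<close> unfolding feasible_def by simp
  qed
  define g where "g i = L i / of_int \<lfloor>L i / l\<rfloor>" for i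
  define l' where "l' = Min (g ` A)"
  obtain i where i: "i \<in> A" "l' = g i"
    using Min_in[of "g ` A"] \<open>A \<noteq> {}\<close> unfolding l'_def A_def by fastforce
  have "l \<le> l'" using le_div_floor_div[OF \<open>0 < l\<close>] i unfolding A_def g_def by auto
  have "m_pieces L n l \<le> m_pieces L n l'"
    unfolding m_pieces_def
  proof (rule sum_mono)
    fix i' assume i': "i' \<in> {1..n}"
    show "\<lfloor>L i' / l\<rfloor> \<le> \<lfloor>L i' / l'\<rfloor>"
    proof (cases "i' \<in> A")
      case True
      have "l' \<le> g i'" unfolding l'_def using True by (simp add: A_def)
      then show ?thesis
        using True L_pos i' \<open>0 < l\<close> \<open>l \<le> l'\<close>
        by (intro le_floor_div_of_le_div) (auto simp: A_def g_def)
    next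
      case False
      then have "\<lfloor>L i' / l\<rfloor> \<le> 0" using i' unfolding A_def by auto
      moreover have "0 \<le> \<lfloor>L i' / l'\<rfloor>"
        using i' L_pos \<open>0 < l\<close> \<open>l \<le> l'\<close> by (auto intro: less_imp_le)
      ultimately show ?thesis by linarith
    qed
  qed
  then have "feasible L n k l'"
    using feasible \<open>0 < l\<close> \<open>l \<le> l'\<close> unfolding feasible_def by auto
  define j where "j = nat \<lfloor>L i / l\<rfloor>"
  have "i \<in> {1..n}" "1 \<le> \<lfloor>L i / l\<rfloor>" using i(1) unfolding A_def by auto
  then have "j \<ge> 1" "of_nat j = (of_int \<lfloor>L i / l\<rfloor> :: rat)"
    unfolding j_def by (linarith, simp)
  moreover have "of_int \<lfloor>L i / l\<rfloor> \<le> L i / l" by simp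
  ultimately show ?thesis
    using \<open>i \<in> {1..n}\<close> \<open>feasible L n k l'\<close> i(2) \<open>l \<le> l'\<close> unfolding g_def by metis
qed

lemma greatest_feasible_div_floor_div:
  assumes L_pos: "\<forall>i\<in>{1..n}. L i > 0" and "n \<ge> 1" "k > 0"
  obtains i j where "i \<in> {1..n}" "j \<ge> 1" "feasible L n k (L i / of_nat j)"
    "\<forall>l. feasible L n k l \<longrightarrow> l \<le> L i / of_nat j"
proof -
  define l0 where "l0 = L 1 / of_nat k"
  have "feasible L n k l0"
    unfolding l0_def using assms by (intro feasible_div_demand) auto
  then have "0 < l0" unfolding feasible_def by simp
  define T where "T = {L i / of_nat j | i j. i \<in> {1..n} \<and> 1 \<le> j \<and> of_nat j \<le> L i / l0
    \<and> feasible L n k (L i / of_nat j)}"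
  have "T \<subseteq> (\<lambda>(i, j). L i / of_nat j) ` (SIGMA i:{1..n}. {..nat \<lfloor>L i / l0\<rfloor>})"
  proof
    fix x assume "x \<in> T"
    then obtain i j where "x = L i / of_nat j" "i \<in> {1..n}" "of_nat j \<le> L i / l0"
      unfolding T_def by blast
    moreover from \<open>of_nat j \<le> L i / l0\<close> have "j \<le> nat \<lfloor>L i / l0\<rfloor>"
      by (simp add: le_nat_iff le_floor_iff)
    ultimately show "x \<in> (\<lambda>(i, j). L i / of_nat j) ` (SIGMA i:{1..n}. {..nat \<lfloor>L i / l0\<rfloor>})"
      by (intro image_eqI[of _ _ "(i, j)"]) auto
  qed
  then have "finite T" by (rule finite_subset) auto
  have T_dominates: "\<exists>t\<in>T. l \<le> t" if l_feasible: "feasible L n k l" and "l0 \<le> l" for l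
  proof -
    obtain i j where ij: "i \<in> {1..n}" "j \<ge> 1" "of_nat j \<le> L i / l" "l \<le> L i / of_nat j"
        "feasible L n k (L i / of_nat j)"
      using feasible_round_up[OF L_pos \<open>k > 0\<close> l_feasible] by blast
    have "L i / l \<le> L i / l0"
      using L_pos ij(1) \<open>0 < l0\<close> \<open>l0 \<le> l\<close> by (intro divide_left_mono) (auto intro: less_imp_le)
    then have "L i / of_nat j \<in> T" unfolding T_def using ij by fastforce
    then show ?thesis using ij(4) by blast
  qed
  have "l \<le> Max T" if "feasible L n k l" for l
  proof -
    obtain t where "t \<in> T" "max l l0 \<le> t"
      using T_dominates[of "max l l0"] \<open>feasible L n k l\<close> \<open>feasible L n k l0\<close>
      by (cases "l \<le> l0") (auto simp: max_def)
    then show ?thesis using Max_ge[OF \<open>finite T\<close>] by fastforce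
  qed
  moreover have "Max T \<in> T"
    using T_dominates[OF \<open>feasible L n k l0\<close>] \<open>finite T\<close> by (intro Max_in) auto
  then obtain i j where "Max T = L i / of_nat j" "i \<in> {1..n}" "j \<ge> 1"
      "feasible L n k (L i / of_nat j)"
    unfolding T_def by blast
  ultimately show ?thesis using that by simp
qed

lemma opt_len_eq_greatest_breakpoint:
  assumes L_pos: "\<forall>i\<in>{1..n}. L i > 0" and "i \<in> {1..n}" "j \<ge> 1"
    and feasible: "feasible L n k (L i / of_nat j)"
    and greatest: "\<forall>l. feasible L n k l \<longrightarrow> l \<le> L i / of_nat j"
  shows "opt_len L n k = L i / of_nat j"
  unfolding opt_len_def
proof (rule the_equality)
  show "feasible L n k (L i / of_nat j) \<and>
      (\<forall>l. feasible L n k l \<longrightarrow> c_cuts L n (L i / of_nat j) \<le> c_cuts L n l)"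
    using feasible greatest c_cuts_antimono[OF L_pos] unfolding feasible_def by auto
next
  fix l assume "feasible L n k l \<and>
      (\<forall>l'. feasible L n k l' \<longrightarrow> c_cuts L n l \<le> c_cuts L n l')"
  then have "l \<le> L i / of_nat j" "0 < l" "c_cuts L n l \<le> c_cuts L n (L i / of_nat j)"
    using greatest feasible unfolding feasible_def by auto
  show "l = L i / of_nat j"
  proof (rule ccontr)
    assume "l \<noteq> L i / of_nat j"
    then have "l < L i / of_nat j" using \<open>l \<le> L i / of_nat j\<close> by simp
    moreover have "L i / (L i / of_nat j) = of_int (int j)"
      using L_pos \<open>i \<in> {1..n}\<close> by force
    ultimately have "c_cuts L n (L i / of_nat j) < c_cuts L n l"
      by (rule c_cuts_strict_antimono_at_breakpoint[OF L_pos \<open>0 < l\<close> _ \<open>i \<in> {1..n}\<close>])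
    then show False using \<open>c_cuts L n l \<le> c_cuts L n (L i / of_nat j)\<close> by simp
  qed
qed

lemma breakpoint_index_le_feasible_index:
  assumes "L i > 0" "j' > 0" "feasible L n k (L i / of_nat j')"
    and greatest: "\<forall>l. feasible L n k l \<longrightarrow> l \<le> L i / of_nat j"
  shows "j \<le> j'"
proof (rule ccontr)
  assume "\<not> j \<le> j'"
  then have "L i / of_nat j < L i / of_nat j'"
    using assms by (intro divide_strict_left_mono) auto
  then show False using greatest assms(3) by fastforce
qed

lemma infeasible_index_less_breakpoint_index:
  assumes L_pos: "\<forall>i\<in>{1..n}. L i > 0" and "i \<in> {1..n}" "j' > 0"
    and "feasible L n k (L i / of_nat j)" "\<not> feasible L n k (L i / of_nat j')"
  shows "j' < j"
proof (rule ccontr)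
  assume "\<not> j' < j"
  have "0 < L i / of_nat j" using \<open>feasible L n k (L i / of_nat j)\<close> unfolding feasible_def ..
  then have "L i / of_nat j' \<le> L i / of_nat j"
    using \<open>\<not> j' < j\<close> by (intro frac_le) (auto simp: zero_less_divide_iff)
  moreover have "0 < L i / of_nat j'" using assms by auto
  ultimately show False using feasible_antimono[OF L_pos] assms(4,5) by blast
qed

lemma mem_candidates:
  assumes "finite I" "i \<in> I" "fl i \<le> j" "j \<le> fu i"
  shows "L i / of_nat j \<in># candidates L I fl fu"
  using assms unfolding candidates_def by (force simp: set_mset_sum)

theorem mainTheorem5:
  fixes L :: "nat \<Rightarrow> rat" and n k :: nat and I :: "nat set" and fl fu :: "nat \<Rightarrow> nat"
  assumes n_pos: "n \<ge> 1"
    and L_pos: "\<forall>i\<in>{1..n}. L i > 0"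
    and k_pos: "k > 0"
    and I_sub: "I \<subseteq> {1..n}"
    and fl_pos: "\<forall>i\<in>I. fl i > 0"
    and fu_pos: "\<forall>i\<in>I. fu i > 0"
    and cond_i: "\<forall>i\<in>I. fl i = 1 \<or> \<not> feasible L n k (L i / of_nat (fl i - 1))"
    and cond_ii: "\<forall>i\<in>I. feasible L n k (L i / of_nat (fu i))"
    and cond_iii: "\<forall>i\<in>{1..n} - I. feasible L n k (L i) \<and> L i \<noteq> opt_len L n k"
  shows "opt_len L n k \<in># candidates L I fl fu"
proof -
  obtain i j where i: "i \<in> {1..n}" and "j \<ge> 1" and feasible: "feasible L n k (L i / of_nat j)"
    and greatest: "\<forall>l. feasible L n k l \<longrightarrow> l \<le> L i / of_nat j"
    using greatest_feasible_div_floor_div[OF L_pos n_pos k_pos] .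
  have opt: "opt_len L n k = L i / of_nat j"
    using opt_len_eq_greatest_breakpoint[OF L_pos i \<open>j \<ge> 1\<close> feasible greatest] .
  have "L i > 0" using L_pos i by blast
  have "i \<in> I"
  proof (rule ccontr)
    assume "i \<notin> I"
    then have "feasible L n k (L i)" "L i \<noteq> L i / of_nat j" using cond_iii i opt by auto
    moreover have "L i / of_nat j \<le> L i" using \<open>L i > 0\<close> \<open>j \<ge> 1\<close> by (simp add: divide_le_eq)
    ultimately show False using greatest by force
  qed
  have "j \<le> fu i"
    using \<open>i \<in> I\<close> fu_pos cond_ii
    by (intro breakpoint_index_le_feasible_index[OF \<open>L i > 0\<close> _ _ greatest]) auto
  moreover have "fl i \<le> j"
  proof (cases "fl i = 1")
    case False
    then have "0 < fl i - 1" "\<not> feasible L n k (L i / of_nat (fl i - 1))"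
      using cond_i fl_pos \<open>i \<in> I\<close> by auto
    then have "fl i - 1 < j" by (rule infeasible_index_less_breakpoint_index[OF L_pos i _ feasible])
    then show ?thesis by simp
  qed (use \<open>j \<ge> 1\<close> in simp)
  ultimately show ?thesis
    using mem_candidates[OF finite_subset[OF I_sub] \<open>i \<in> I\<close>] opt by simp
qed

end
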